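(* Let $N\ge 2$ be an integer and index rows and columns of $N\times N$ matrices by $0,1,\dots,N-1$. Let $H$ be the complex symmetric tridiagonal $N\times N$ matrix with diagonal entries $H_{n,n}={\rm i}\,(2n-N+1)$ for $n=0,\dots,N-1$ and off-diagonal entries $H_{n-1,n}=H_{n,n-1}=\sqrt{n(N-n)}$ for $n=1,\dots,N-1$ (all other entries zero). Let $J$ be the $N\times N$ nilpotent Jordan block, $J_{n,n+1}=1$ for $n=0,\dots,N-2$ and all other entries zero. Define the diagonal matrices $D$, $G$ and the matrix $P$ by $$D_{n,n}={\rm i}^n\sqrt{\binom{N-1}{n}},\qquad G_{n,n}=(-{\rm i})^{N-n-1}\,(N-1-n)!,\qquad P_{m,q}=\binom{N-1-m}{q}\quad (n,m,q=0,\dots,N-1),$$ with the convention $\binom{a}{b}=0$ for $b>a$. Then $Q:=D\,P\,G$ is invertible and satisfies $H\,Q=Q\,J$, i.e. $Q^{-1}HQ=J$.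
   Context: $H$ is the Bose–Hubbard Hamiltonian $H^{(N)}_{(BH)}(z)$ evaluated at its exceptional point $z=1$; $Q$ is called the transition matrix (it brings $H$ to the Jordan block with eigenvalue $0$). *)

theory Defs
  imports "Jordan_Normal_Form.Matrix"
begin

definition BH_H :: "nat \<Rightarrow> complex mat" where
  "BH_H N = mat N N (\<lambda>(r, c).
     if r = c then \<i> * (2 * of_nat r - of_nat N + 1)
     else if r + 1 = c then complex_of_real (sqrt (real (c * (N - c))))
     else if c + 1 = r then complex_of_real (sqrt (real (r * (N - r))))
     else 0)"

definition jordan_J :: "nat \<Rightarrow> complex mat" where
  "jordan_J N = mat N N (\<lambda>(r, c). if c = r + 1 then 1 else 0)"

definition BH_D :: "nat \<Rightarrow> complex mat" where
  "BH_D N = mat N N (\<lambda>(r, c). if r = c then \<i> ^ r * complex_of_real (sqrt (real ((N - 1) choose r))) else 0)"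

definition BH_G :: "nat \<Rightarrow> complex mat" where
  "BH_G N = mat N N (\<lambda>(r, c). if r = c then (- \<i>) ^ (N - r - 1) * of_nat (fact (N - 1 - r)) else 0)"

text \<open>Note: nat binomial is 0 when q > N-1-m, matching the paper's convention.\<close>
definition BH_P :: "nat \<Rightarrow> complex mat" where
  "BH_P N = mat N N (\<lambda>(m, q). of_nat ((N - 1 - m) choose q))"

definition BH_Q :: "nat \<Rightarrow> complex mat" where
  "BH_Q N = BH_D N * BH_P N * BH_G N"

end

theory Submission
  imports Defs "Jordan_Normal_Form.Determinant"
begin

(* With n = N - 1, the identity (j + 1) C(n, j + 1) = (n - j) C(n, j) makes the square roots in H
   cancel against those in D: H D = D K, where K is tridiagonal with entries -i m, i (2m - N + 1)
   and i (N - 1 - m) on the sub-, main and superdiagonal. Pascal's rule and absorption for binomial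
   coefficients give K P = P J', where J' has superdiagonal entries -i (N - 1 - m), and the
   factorials in G rescale J' to the Jordan block: J' G = G J. For invertibility, D and G are diagonal with nonzero entries, and P is the
   exchange matrix times the lower unitriangular Pascal matrix (r choose c). *)

definition tridiag_mat ::
    "nat \<Rightarrow> (nat \<Rightarrow> 'a) \<Rightarrow> (nat \<Rightarrow> 'a) \<Rightarrow> (nat \<Rightarrow> 'a) \<Rightarrow> 'a :: zero mat" where
  "tridiag_mat n l d u = mat n n (\<lambda>(r, c).
     if r = c then d r else if r + 1 = c then u r else if c + 1 = r then l r else 0)"

lemma dim_tridiag_mat [simp]:
  "dim_row (tridiag_mat n l d u) = n" "dim_col (tridiag_mat n l d u) = n"
  by (simp_all add: tridiag_mat_def)

lemma tridiag_mat_carrier [simp]: "tridiag_mat n l d u \<in> carrier_mat n n"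
  by (simp add: carrier_matI)

lemma tridiag_mat_cong:
  assumes "\<And>r. 0 < r \<Longrightarrow> r < n \<Longrightarrow> l r = l' r" and "\<And>r. r < n \<Longrightarrow> d r = d' r"
    and "\<And>r. r + 1 < n \<Longrightarrow> u r = u' r"
  shows "tridiag_mat n l d u = tridiag_mat n l' d' u'"
  using assms by (intro eq_matI) (auto simp: tridiag_mat_def)

lemma tridiag_mat_mult_mat_diag:
  fixes l d u e :: "nat \<Rightarrow> 'a :: semiring_0"
  shows "tridiag_mat n l d u * mat_diag n e
    = tridiag_mat n (\<lambda>r. l r * e (r - 1)) (\<lambda>r. d r * e r) (\<lambda>r. u r * e (r + 1))"
  by (subst mat_diag_mult_right[of _ n]) (auto simp: tridiag_mat_def intro!: eq_matI)

lemma mat_diag_mult_tridiag_mat: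
  fixes l d u e :: "nat \<Rightarrow> 'a :: semiring_0"
  shows "mat_diag n e * tridiag_mat n l d u
    = tridiag_mat n (\<lambda>r. e r * l r) (\<lambda>r. e r * d r) (\<lambda>r. e r * u r)"
  by (subst mat_diag_mult_left[of _ n]) (auto simp: tridiag_mat_def intro!: eq_matI)

lemma tridiag_mat_mult_index:
  fixes A :: "'a :: semiring_0 mat"
  assumes "A \<in> carrier_mat n m" "i < n" "j < m"
  shows "(tridiag_mat n l d u * A) $$ (i, j) = (if 0 < i then l i * A $$ (i - 1, j) else 0)
    + d i * A $$ (i, j) + (if i + 1 < n then u i * A $$ (i + 1, j) else 0)"
proof -
  have "(tridiag_mat n l d u * A) $$ (i, j) = (\<Sum>k<n. tridiag_mat n l d u $$ (i, k) * A $$ (k, j))"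
    using assms by (simp add: carrier_matD scalar_prod_def atLeast0LessThan)
  also have "\<dots> = (\<Sum>k<n. (if k = i - 1 then (if 0 < i then l i * A $$ (i - 1, j) else 0) else 0)
      + (if k = i then d i * A $$ (i, j) else 0) + (if k = i + 1 then u i * A $$ (i + 1, j) else 0))"
    using assms by (intro sum.cong) (auto simp: tridiag_mat_def)
  also have "\<dots> = (if 0 < i then l i * A $$ (i - 1, j) else 0)
    + d i * A $$ (i, j) + (if i + 1 < n then u i * A $$ (i + 1, j) else 0)"
    using assms by (auto simp: sum.distrib)
  finally show ?thesis .
qed

lemma mult_tridiag_mat_index:
  fixes A :: "'a :: semiring_0 mat"
  assumes "A \<in> carrier_mat m n" "i < m" "j < n"
  shows "(A * tridiag_mat n l d u) $$ (i, j) = (if 0 < j then A $$ (i, j - 1) * u (j - 1) else 0)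
    + A $$ (i, j) * d j + (if j + 1 < n then A $$ (i, j + 1) * l (j + 1) else 0)"
proof -
  have "(A * tridiag_mat n l d u) $$ (i, j) = (\<Sum>k<n. A $$ (i, k) * tridiag_mat n l d u $$ (k, j))"
    using assms by (simp add: carrier_matD scalar_prod_def atLeast0LessThan)
  also have "\<dots> = (\<Sum>k<n. (if k = j - 1 then (if 0 < j then A $$ (i, j - 1) * u (j - 1) else 0) else 0)
      + (if k = j then A $$ (i, j) * d j else 0) + (if k = j + 1 then A $$ (i, j + 1) * l (j + 1) else 0))"
    using assms by (intro sum.cong) (auto simp: tridiag_mat_def)
  also have "\<dots> = (if 0 < j then A $$ (i, j - 1) * u (j - 1) else 0)
    + A $$ (i, j) * d j + (if j + 1 < n then A $$ (i, j + 1) * l (j + 1) else 0)"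
    using assms by (auto simp: sum.distrib)
  finally show ?thesis .
qed

lemma Suc_times_binomial_eq_diff_times: "Suc j * (n choose Suc j) = (n - j) * (n choose j)"
  by (metis binomial_absorb_comp binomial_absorption)

lemma sqrt_mult_eq_times_sqrt:
  fixes x y z w :: real
  assumes "x * y = z\<^sup>2 * w" "0 \<le> z"
  shows "sqrt x * sqrt y = z * sqrt w"
proof -
  have "sqrt x * sqrt y = sqrt (z\<^sup>2) * sqrt w"
    by (simp only: real_sqrt_mult[symmetric] assms(1))
  then show ?thesis using assms(2) by simp
qed

lemma sqrt_binomial_step_down:
  "sqrt (real (Suc j * (n - j))) * sqrt (real (n choose j)) = real (Suc j) * sqrt (real (n choose Suc j))"
proof (rule sqrt_mult_eq_times_sqrt)
  show "real (Suc j * (n - j)) * real (n choose j) = (real (Suc j))\<^sup>2 * real (n choose Suc j)"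
    unfolding power2_eq_square of_nat_mult[symmetric] mult.assoc Suc_times_binomial_eq_diff_times
    by (simp only: ac_simps)
qed simp

lemma sqrt_binomial_step_up:
  "sqrt (real (Suc j * (n - j))) * sqrt (real (n choose Suc j)) = real (n - j) * sqrt (real (n choose j))"
proof (rule sqrt_mult_eq_times_sqrt)
  show "real (Suc j * (n - j)) * real (n choose Suc j) = (real (n - j))\<^sup>2 * real (n choose j)"
    unfolding power2_eq_square of_nat_mult[symmetric] mult.assoc
    by (metis Suc_times_binomial_eq_diff_times mult.commute mult.left_commute)
qed simp

lemma binomial_three_term_identity:
  "m * (Suc k choose q) + k * (k choose q)
    = m * (k choose q) + k * ((k - 1) choose q) + (if q = 0 then 0 else (m + k + 1 - q) * (k choose (q - 1)))"
proof (cases q)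
  case (Suc j)
  have pascal: "k * (k choose Suc j) = k * ((k - 1) choose Suc j) + (k - j) * (k choose j)"
  proof (cases k)
    case (Suc k')
    then show ?thesis using binomial_absorb_comp[of k j] by (simp add: algebra_simps)
  qed simp
  have collect: "m * (k choose j) + (k - j) * (k choose j) = (m + k - j) * (k choose j)"
    by (cases "j \<le> k") (simp_all add: binomial_eq_0 flip: add_mult_distrib Nat.add_diff_assoc)
  have "m * (Suc k choose Suc j) + k * (k choose Suc j)
      = m * (k choose Suc j) + k * ((k - 1) choose Suc j) + (m * (k choose j) + (k - j) * (k choose j))"
    by (simp add: pascal distrib_left)
  then show ?thesis using Suc collect by simp
qed simp

definition BH_K :: "nat \<Rightarrow> complex mat" where
  "BH_K N = tridiag_mat N (\<lambda>r. - \<i> * of_nat r) (\<lambda>r. \<i> * (2 * of_nat r - of_nat N + 1))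
     (\<lambda>r. \<i> * of_nat (N - 1 - r))"

definition jordan_J_scaled :: "nat \<Rightarrow> complex mat" where
  "jordan_J_scaled N = tridiag_mat N (\<lambda>_. 0) (\<lambda>_. 0) (\<lambda>r. - \<i> * of_nat (N - 1 - r))"

lemma carrier_mat_BH [simp]:
  "BH_H N \<in> carrier_mat N N" "BH_D N \<in> carrier_mat N N" "BH_P N \<in> carrier_mat N N"
  "BH_G N \<in> carrier_mat N N" "BH_K N \<in> carrier_mat N N"
  "jordan_J N \<in> carrier_mat N N" "jordan_J_scaled N \<in> carrier_mat N N"
  by (simp_all add: BH_H_def BH_D_def BH_P_def BH_G_def BH_K_def jordan_J_def jordan_J_scaled_def)

lemma carrier_mat_BH_Q [simp]: "BH_Q N \<in> carrier_mat N N"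
  unfolding BH_Q_def by (intro mult_carrier_mat[of _ N N _ N]) simp_all

lemma BH_H_eq_tridiag_mat:
  "BH_H N = tridiag_mat N (\<lambda>r. complex_of_real (sqrt (real (r * (N - r)))))
     (\<lambda>r. \<i> * (2 * of_nat r - of_nat N + 1))
     (\<lambda>r. complex_of_real (sqrt (real (Suc r * (N - Suc r)))))"
  by (auto simp: BH_H_def tridiag_mat_def simp del: mult_Suc intro!: eq_matI)

lemma jordan_J_eq_tridiag_mat: "jordan_J N = tridiag_mat N (\<lambda>_. 0) (\<lambda>_. 0) (\<lambda>_. 1)"
  by (auto simp: jordan_J_def tridiag_mat_def intro!: eq_matI)

lemma BH_D_eq_mat_diag:
  "BH_D N = mat_diag N (\<lambda>r. \<i> ^ r * complex_of_real (sqrt (real ((N - 1) choose r))))"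
  by (auto simp: BH_D_def mat_diag_def intro!: eq_matI)

lemma BH_G_eq_mat_diag: "BH_G N = mat_diag N (\<lambda>r. (- \<i>) ^ (N - r - 1) * of_nat (fact (N - 1 - r)))"
  by (auto simp: BH_G_def mat_diag_def intro!: eq_matI)

lemma BH_H_mult_D: "BH_H N * BH_D N = BH_D N * BH_K N"
  unfolding BH_H_eq_tridiag_mat BH_D_eq_mat_diag BH_K_def
    tridiag_mat_mult_mat_diag mat_diag_mult_tridiag_mat
proof (rule tridiag_mat_cong)
  fix r assume "0 < r" "r < N"
  then obtain j n where r: "r = Suc j" and N: "N = Suc n"
    by (cases r; cases N) auto
  have "complex_of_real (sqrt (real (Suc j * (n - j)))) * complex_of_real (sqrt (real (n choose j)))
      = of_nat (Suc j) * complex_of_real (sqrt (real (n choose Suc j)))"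
    using arg_cong[OF sqrt_binomial_step_down, of complex_of_real]
    by (simp only: of_real_mult of_real_of_nat_eq)
  then show "complex_of_real (sqrt (real (r * (N - r))))
        * (\<i> ^ (r - 1) * complex_of_real (sqrt (real ((N - 1) choose (r - 1)))))
      = \<i> ^ r * complex_of_real (sqrt (real ((N - 1) choose r))) * (- \<i> * of_nat r)"
    using r N by (simp add: algebra_simps)
next
  fix r assume "r + 1 < N"
  then obtain n where N: "N = Suc n"
    by (cases N) auto
  have "complex_of_real (sqrt (real (Suc r * (n - r)))) * complex_of_real (sqrt (real (n choose Suc r)))
      = of_nat (n - r) * complex_of_real (sqrt (real (n choose r)))"
    using arg_cong[OF sqrt_binomial_step_up, of complex_of_real]
    by (simp only: of_real_mult of_real_of_nat_eq)
  then show "complex_of_real (sqrt (real (Suc r * (N - Suc r))))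
        * (\<i> ^ (r + 1) * complex_of_real (sqrt (real ((N - 1) choose (r + 1)))))
      = \<i> ^ r * complex_of_real (sqrt (real ((N - 1) choose r))) * (\<i> * of_nat (N - 1 - r))"
    using N by (simp add: algebra_simps)
qed (simp add: mult.commute)

lemma BH_K_mult_P: "BH_K N * BH_P N = BH_P N * jordan_J_scaled N"
proof (rule eq_matI)
  fix m q assume "m < dim_row (BH_P N * jordan_J_scaled N)" "q < dim_col (BH_P N * jordan_J_scaled N)"
  then have m: "m < N" and q: "q < N" by (simp_all add: BH_P_def jordan_J_scaled_def)
  define k where "k = N - 1 - m"
  have N: "N = m + k + 1" using m by (simp add: k_def)
  have recurrence: "of_nat m * of_nat (Suc k choose q) + of_nat k * of_nat (k choose q)
      = of_nat m * of_nat (k choose q) + of_nat k * of_nat ((k - 1) choose q)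
        + (if q = 0 then 0 else of_nat (m + k + 1 - q) * of_nat (k choose (q - 1)) :: complex)"
    using arg_cong[OF binomial_three_term_identity, of "of_nat :: nat \<Rightarrow> complex"] by simp
  have "(BH_K N * BH_P N) $$ (m, q) = - \<i> * (of_nat m * of_nat (Suc k choose q) + of_nat k * of_nat (k choose q))
      + \<i> * (of_nat m * of_nat (k choose q) + of_nat k * of_nat ((k - 1) choose q))"
    unfolding BH_K_def tridiag_mat_mult_index[OF carrier_mat_BH(3) m q]
    using m q by (auto simp: BH_P_def N algebra_simps)
  also have "\<dots> = - \<i> * (if q = 0 then 0 else of_nat (m + k + 1 - q) * of_nat (k choose (q - 1)))"
    unfolding recurrence by (simp add: algebra_simps)
  also have "\<dots> = (BH_P N * jordan_J_scaled N) $$ (m, q)"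
    unfolding jordan_J_scaled_def mult_tridiag_mat_index[OF carrier_mat_BH(3) m q]
    using m q by (auto simp: BH_P_def N)
  finally show "(BH_K N * BH_P N) $$ (m, q) = (BH_P N * jordan_J_scaled N) $$ (m, q)" .
qed (simp_all add: BH_K_def BH_P_def jordan_J_scaled_def)

lemma jordan_J_scaled_mult_G: "jordan_J_scaled N * BH_G N = BH_G N * jordan_J N"
  unfolding jordan_J_scaled_def BH_G_eq_mat_diag jordan_J_eq_tridiag_mat
    tridiag_mat_mult_mat_diag mat_diag_mult_tridiag_mat
proof (rule tridiag_mat_cong)
  fix r assume "r + 1 < N"
  then obtain t where "N - 1 - r = Suc t" "N - r - 1 = Suc t" "N - 1 - (r + 1) = t" "N - (r + 1) - 1 = t"
    by (cases "N - 1 - r") auto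
  then show "- \<i> * of_nat (N - 1 - r) * ((- \<i>) ^ (N - (r + 1) - 1) * of_nat (fact (N - 1 - (r + 1))))
      = (- \<i>) ^ (N - r - 1) * of_nat (fact (N - 1 - r)) * 1"
    by (simp add: algebra_simps)
qed simp_all

lemma mult_mat_intertwining_trans:
  fixes A B C X Y :: "'a :: semiring_0 mat"
  assumes "A \<in> carrier_mat n n" "B \<in> carrier_mat n n" "C \<in> carrier_mat n n"
    "X \<in> carrier_mat n n" "Y \<in> carrier_mat n n"
    and "A * X = X * B" and "B * Y = Y * C"
  shows "A * (X * Y) = X * Y * C"
proof -
  have "A * (X * Y) = A * X * Y" using assms(1,4,5) by (simp add: assoc_mult_mat)
  also have "\<dots> = X * (B * Y)" using assms(2,4,5,6) by (simp add: assoc_mult_mat)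
  also have "\<dots> = X * Y * C" using assms(3,4,5,7) by (simp add: assoc_mult_mat)
  finally show ?thesis .
qed

lemma BH_H_mult_Q: "BH_H N * BH_Q N = BH_Q N * jordan_J N"
proof -
  have "BH_H N * (BH_D N * BH_P N) = BH_D N * BH_P N * jordan_J_scaled N"
    by (rule mult_mat_intertwining_trans[where n = N, OF _ _ _ _ _ BH_H_mult_D BH_K_mult_P]) simp_all
  then show ?thesis unfolding BH_Q_def
    by (intro mult_mat_intertwining_trans[where n = N, OF _ _ _ _ _ _ jordan_J_scaled_mult_G])
      (simp_all add: mult_carrier_mat[of _ N N _ N])
qed

definition exchange_mat :: "nat \<Rightarrow> 'a :: {zero, one} mat" where
  "exchange_mat n = mat n n (\<lambda>(r, c). if r + c = n - 1 then 1 else 0)"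

definition pascal_mat :: "nat \<Rightarrow> 'a :: semiring_1 mat" where
  "pascal_mat n = mat n n (\<lambda>(r, c). of_nat (r choose c))"

lemma dim_exchange_mat [simp]:
  "dim_row (exchange_mat n) = n" "dim_col (exchange_mat n) = n"
  by (simp_all add: exchange_mat_def)

lemma dim_pascal_mat [simp]:
  "dim_row (pascal_mat n) = n" "dim_col (pascal_mat n) = n"
  by (simp_all add: pascal_mat_def)

lemma BH_P_eq_exchange_mult_pascal: "BH_P N = exchange_mat N * pascal_mat N"
proof (rule eq_matI)
  fix r c assume "r < dim_row (exchange_mat N * pascal_mat N :: complex mat)"
    "c < dim_col (exchange_mat N * pascal_mat N :: complex mat)"
  then have r: "r < N" and c: "c < N" by (simp_all add: exchange_mat_def pascal_mat_def)
  have "(exchange_mat N * pascal_mat N) $$ (r, c)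
      = (\<Sum>k<N. exchange_mat N $$ (r, k) * pascal_mat N $$ (k, c) :: complex)"
    using r c by (simp add: scalar_prod_def atLeast0LessThan)
  also have "\<dots> = (\<Sum>k<N. if k = N - 1 - r then of_nat (k choose c) else 0)"
    using r c by (intro sum.cong) (auto simp: exchange_mat_def pascal_mat_def)
  also have "\<dots> = BH_P N $$ (r, c)" using r c by (auto simp: BH_P_def pascal_mat_def)
  finally show "BH_P N $$ (r, c) = (exchange_mat N * pascal_mat N) $$ (r, c)" ..
qed (simp_all add: BH_P_def exchange_mat_def pascal_mat_def)

lemma exchange_mat_mult_self: "exchange_mat n * exchange_mat n = (1\<^sub>m n :: 'a :: semiring_1 mat)"
proof (rule eq_matI)
  fix r c assume "r < dim_row (1\<^sub>m n :: 'a mat)" "c < dim_col (1\<^sub>m n :: 'a mat)"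
  then have r: "r < n" and c: "c < n" by simp_all
  have "(exchange_mat n * exchange_mat n) $$ (r, c)
      = (\<Sum>k<n. exchange_mat n $$ (r, k) * exchange_mat n $$ (k, c) :: 'a)"
    using r c by (simp add: scalar_prod_def atLeast0LessThan)
  also have "\<dots> = (\<Sum>k<n. if k = n - 1 - r then (if r = c then 1 else 0) else 0)"
    using r c by (intro sum.cong) (auto simp: exchange_mat_def)
  also have "\<dots> = 1\<^sub>m n $$ (r, c)" using r c by simp
  finally show "(exchange_mat n * exchange_mat n) $$ (r, c) = (1\<^sub>m n :: 'a mat) $$ (r, c)" .
qed (simp_all add: exchange_mat_def)

lemma det_exchange_mat_nonzero: "det (exchange_mat n :: 'a :: idom mat) \<noteq> 0"
proof -
  have "det (exchange_mat n :: 'a mat) * det (exchange_mat n) = 1"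
    using det_mult[of "exchange_mat n" n "exchange_mat n"]
    by (simp add: exchange_mat_mult_self carrier_matI)
  then show ?thesis by auto
qed

lemma det_pascal_mat: "det (pascal_mat n :: 'a :: comm_ring_1 mat) = 1"
proof -
  have "det (pascal_mat n :: 'a mat) = prod_list (diag_mat (pascal_mat n))"
    by (rule det_lower_triangular[of n]) (simp_all add: pascal_mat_def binomial_eq_0)
  also have "diag_mat (pascal_mat n :: 'a mat) = replicate n 1"
    by (rule nth_equalityI) (simp_all add: diag_mat_def pascal_mat_def)
  finally show ?thesis by simp
qed

lemma det_mat_diag: "det (mat_diag n f :: 'a :: comm_ring_1 mat) = (\<Prod>i<n. f i)"
proof -
  have "det (mat_diag n f) = prod_list (diag_mat (mat_diag n f))"
    by (rule det_lower_triangular[of n]) (simp_all add: mat_diag_def)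
  also have "\<dots> = (\<Prod>i<n. f i)"
    by (simp add: diag_mat_def mat_diag_def prod.list_conv_set_nth atLeast0LessThan)
  finally show ?thesis .
qed

lemma invertible_mat_if_det_nonzero:
  fixes A :: "'a :: field mat"
  assumes "A \<in> carrier_mat n n" "det A \<noteq> 0"
  shows "invertible_mat A"
proof -
  obtain B where "B * A = 1\<^sub>m n" "A * B = 1\<^sub>m n"
    using det_non_zero_imp_unit[OF assms, of undefined] by (auto simp: Units_def ring_mat_def)
  moreover from \<open>B * A = 1\<^sub>m n\<close> have "dim_row B = n"
    by (metis index_mult_mat(2) index_one_mat(2))
  ultimately show ?thesis using assms(1) by (auto simp: invertible_mat_def inverts_mat_def)
qed

lemma invertible_BH_Q: "invertible_mat (BH_Q N)"
proof (rule invertible_mat_if_det_nonzero[where n = N])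
  have "det (BH_P N) \<noteq> 0"
    unfolding BH_P_eq_exchange_mult_pascal
    by (simp add: det_mult[of _ N] det_exchange_mat_nonzero det_pascal_mat carrier_matI)
  moreover have "det (BH_D N) \<noteq> 0" "det (BH_G N) \<noteq> 0"
    by (auto simp: BH_D_eq_mat_diag BH_G_eq_mat_diag det_mat_diag)
  ultimately show "det (BH_Q N) \<noteq> 0"
    by (simp add: BH_Q_def det_mult[of _ N] mult_carrier_mat[of _ N N _ N])
qed simp

theorem mainTheorem1:
  fixes N :: nat
  assumes "N \<ge> 2"
  shows "invertible_mat (BH_Q N) \<and> BH_H N * BH_Q N = BH_Q N * jordan_J N"
  using invertible_BH_Q BH_H_mult_Q by blast

end
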